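(* Let $I$ be an index set. For each $i\in I$ let $(X_i,\le_i)$ be a poset and $E_i$ an equivalence relation on $X_i$ with ${\le_i}\subseteq E_i$, and assume $X_i\cap X_j=\varnothing$ for $i\ne j$. Suppose that for each $i\in I$, $\alpha_i:X_i\to X_i$ is an order automorphism of $(X_i,\le_i)$ and $\beta_i:X_i\to X_i$ is a self-inverse dual order automorphism of $(X_i,\le_i)$ with $\alpha_i,\beta_i\subseteq E_i$ and $\beta_i=\alpha_i\circ\beta_i\circ\alpha_i$. Let $X=\bigcup_iX_i$, ${\le}=\bigcup_i{\le_i}$, $E=\bigcup_iE_i$, $\alpha=\bigcup_i\alpha_i$ and $\beta=\bigcup_i\beta_i$ (so $\alpha(x)=\alpha_i(x)$ and $\beta(x)=\beta_i(x)$ for $x\in X_i$). Then: (i) $(X,\le)$ is a poset and $E$ is an equivalence relation on $X$ with ${\le}\subseteq E$; (ii) $\alpha$ is an order automorphism of $(X,\le)$ with $\alpha\subseteq E$; (iii) $\beta$ is a self-inverse dual order automorphism of $(X,\le)$ with $\beta\subseteq E$; (iv) $\beta=\alpha\circ\beta\circ\alpha$; (v) $\mathbf{Dq}(\mathbf E)\cong\prod_{i\in I}\mathbf{Dq}(\mathbf E_i)$.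
   Context: For binary relations: converse $R^\smile$; composition $R\circ S=\{(x,y)\mid\exists z\,((x,z)\in R,(z,y)\in S)\}$. Functions are identified with their graphs. Order automorphism: bijection with $x\le y\iff\alpha(x)\le\alpha(y)$; dual order automorphism: bijection with $x\le y\iff\beta(y)\le\beta(x)$; self-inverse: $\beta\circ\beta=\mathrm{id}$. Given a poset $(Y,\le)$, an equivalence relation $F\supseteq{\le}$ on $Y$, and such $\alpha,\beta\subseteq F$ with $\beta=\alpha\circ\beta\circ\alpha$: $F$ is ordered by $(u,v)\preceq(x,y)$ iff $x\le u$ and $v\le y$, $\mathbf F=(F,\preceq)$; complements are $R^c=F\setminus R$; and $\mathbf{Dq}(\mathbf F)$ is the algebra $\langle\mathsf{Up}(\mathbf F),\cap,\cup,\circ,1,0,{\sim},-,'\rangle$ of up-sets of $\mathbf F$ with $1={\le}$, $0=\alpha\circ({\le}^c)^\smile$, ${\sim}R=(R^\smile\circ0^c)^c$, $-R=(0^c\circ R^\smile)^c$, $R'=\alpha\circ\beta\circ R^c\circ\beta$ (a distributive quasi relation algebra). Here $\mathbf{Dq}(\mathbf E_i)$ is formed with $\le_i,\alpha_i,\beta_i$, and $\mathbf{Dq}(\mathbf E)$ with $\le,\alpha,\beta$. *)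

theory Defs
  imports Main "HOL-Library.FuncSet"
begin

text \<open>Functions are identified with their graphs, i.e. binary relations.
  Relational composition R \<circ> S of the paper (first R, then S) is Isabelle's R O S.\<close>

definition rel_fun_on :: "'a set \<Rightarrow> ('a \<times> 'a) set \<Rightarrow> bool" where
  "rel_fun_on X R \<longleftrightarrow> R \<subseteq> X \<times> X \<and> (\<forall>x\<in>X. \<exists>!y. (x, y) \<in> R)"

definition rel_bij_on :: "'a set \<Rightarrow> ('a \<times> 'a) set \<Rightarrow> bool" where
  "rel_bij_on X R \<longleftrightarrow> rel_fun_on X R \<and> (\<forall>y\<in>X. \<exists>!x. (x, y) \<in> R)"

definition order_aut :: "'a set \<Rightarrow> ('a \<times> 'a) set \<Rightarrow> ('a \<times> 'a) set \<Rightarrow> bool" where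
  "order_aut X le R \<longleftrightarrow> rel_bij_on X R \<and>
     (\<forall>x y x' y'. (x, x') \<in> R \<longrightarrow> (y, y') \<in> R \<longrightarrow> ((x, y) \<in> le \<longleftrightarrow> (x', y') \<in> le))"

definition dual_order_aut :: "'a set \<Rightarrow> ('a \<times> 'a) set \<Rightarrow> ('a \<times> 'a) set \<Rightarrow> bool" where
  "dual_order_aut X le R \<longleftrightarrow> rel_bij_on X R \<and>
     (\<forall>x y x' y'. (x, x') \<in> R \<longrightarrow> (y, y') \<in> R \<longrightarrow> ((x, y) \<in> le \<longleftrightarrow> (y', x') \<in> le))"

definition self_inverse :: "'a set \<Rightarrow> ('a \<times> 'a) set \<Rightarrow> bool" where
  "self_inverse X R \<longleftrightarrow> R O R = Id_on X"

record 'b dqalg =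
  dq_carrier :: "'b set"
  dq_meet :: "'b \<Rightarrow> 'b \<Rightarrow> 'b"
  dq_join :: "'b \<Rightarrow> 'b \<Rightarrow> 'b"
  dq_comp :: "'b \<Rightarrow> 'b \<Rightarrow> 'b"
  dq_one :: "'b"
  dq_zero :: "'b"
  dq_tilde :: "'b \<Rightarrow> 'b"
  dq_minus :: "'b \<Rightarrow> 'b"
  dq_prime :: "'b \<Rightarrow> 'b"

text \<open>Up-sets of F ordered by (u,v) \<preceq> (x,y) iff x \<le> u and v \<le> y.\<close>
definition up_sets :: "('a \<times> 'a) set \<Rightarrow> ('a \<times> 'a) set \<Rightarrow> ('a \<times> 'a) set set" where
  "up_sets F le = {R. R \<subseteq> F \<and>
     (\<forall>u v x y. (u, v) \<in> R \<longrightarrow> (x, y) \<in> F \<longrightarrow> (x, u) \<in> le \<longrightarrow> (v, y) \<in> le \<longrightarrow> (x, y) \<in> R)}"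

definition dq_zero_rel :: "('a \<times> 'a) set \<Rightarrow> ('a \<times> 'a) set \<Rightarrow> ('a \<times> 'a) set \<Rightarrow> ('a \<times> 'a) set" where
  "dq_zero_rel F le alpha = alpha O converse (F - le)"

definition Dq :: "('a \<times> 'a) set \<Rightarrow> ('a \<times> 'a) set \<Rightarrow> ('a \<times> 'a) set \<Rightarrow> ('a \<times> 'a) set
    \<Rightarrow> ('a \<times> 'a) set dqalg" where
  "Dq F le alpha beta =
    \<lparr> dq_carrier = up_sets F le,
      dq_meet = (\<inter>),
      dq_join = (\<union>),
      dq_comp = (O),
      dq_one = le,
      dq_zero = dq_zero_rel F le alpha,
      dq_tilde = (\<lambda>R. F - (converse R O (F - dq_zero_rel F le alpha))),
      dq_minus = (\<lambda>R. F - ((F - dq_zero_rel F le alpha) O converse R)),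
      dq_prime = (\<lambda>R. alpha O beta O (F - R) O beta) \<rparr>"

definition dq_prod :: "'i set \<Rightarrow> ('i \<Rightarrow> 'b dqalg) \<Rightarrow> ('i \<Rightarrow> 'b) dqalg" where
  "dq_prod I A =
    \<lparr> dq_carrier = PiE I (\<lambda>i. dq_carrier (A i)),
      dq_meet = (\<lambda>f g. \<lambda>i\<in>I. dq_meet (A i) (f i) (g i)),
      dq_join = (\<lambda>f g. \<lambda>i\<in>I. dq_join (A i) (f i) (g i)),
      dq_comp = (\<lambda>f g. \<lambda>i\<in>I. dq_comp (A i) (f i) (g i)),
      dq_one = (\<lambda>i\<in>I. dq_one (A i)),
      dq_zero = (\<lambda>i\<in>I. dq_zero (A i)),
      dq_tilde = (\<lambda>f. \<lambda>i\<in>I. dq_tilde (A i) (f i)),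
      dq_minus = (\<lambda>f. \<lambda>i\<in>I. dq_minus (A i) (f i)),
      dq_prime = (\<lambda>f. \<lambda>i\<in>I. dq_prime (A i) (f i)) \<rparr>"

definition dq_iso :: "('b, 'm) dqalg_scheme \<Rightarrow> ('c, 'n) dqalg_scheme \<Rightarrow> ('b \<Rightarrow> 'c) \<Rightarrow> bool" where
  "dq_iso A B h \<longleftrightarrow> bij_betw h (dq_carrier A) (dq_carrier B) \<and>
     (\<forall>x\<in>dq_carrier A. \<forall>y\<in>dq_carrier A.
        h (dq_meet A x y) = dq_meet B (h x) (h y) \<and>
        h (dq_join A x y) = dq_join B (h x) (h y) \<and>
        h (dq_comp A x y) = dq_comp B (h x) (h y)) \<and>
     h (dq_one A) = dq_one B \<and> h (dq_zero A) = dq_zero B \<and>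
     (\<forall>x\<in>dq_carrier A.
        h (dq_tilde A x) = dq_tilde B (h x) \<and>
        h (dq_minus A x) = dq_minus B (h x) \<and>
        h (dq_prime A x) = dq_prime B (h x))"

definition dq_isomorphic :: "('b, 'm) dqalg_scheme \<Rightarrow> ('c, 'n) dqalg_scheme \<Rightarrow> bool" where
  "dq_isomorphic A B \<longleftrightarrow> (\<exists>h. dq_iso A B h)"

end

theory Submission imports Defs "HOL-Library.Disjoint_Sets" begin

(* Because the X_i are pairwise disjoint, every relation in sight is block diagonal, and on
   block-diagonal relations the relational operations act blockwise: union over i commutes with
   composition, converse and intersection, and restriction to a block X_i x X_i commutes with
   composition, converse and complement relative to E. Being a partial order, an equivalence, an
   order automorphism (R^-1 O le O R = le), a dual order automorphism (R^-1 O le O R = le^-1) or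
   self-inverse (R O R = Id) are relational equations and inclusions, so they pass from the
   blocks to the union. The isomorphism Dq(E) -> prod_i Dq(E_i) sends an up-set R to its
   restrictions R cap (X_i x X_i); its inverse is the union of the components. *)

lemma trans_iff_relcomp_subset: "trans r \<longleftrightarrow> r O r \<subseteq> r"
  unfolding trans_def by blast

lemma antisym_iff_Int_converse_subset_Id: "antisym r \<longleftrightarrow> r \<inter> r\<inverse> \<subseteq> Id"
  unfolding antisym_def by blast

lemma rel_bij_on_transport_iff:
  assumes bij: "rel_bij_on X R" and P: "P \<subseteq> X \<times> X" and Q: "Q \<subseteq> X \<times> X"
  shows "(\<forall>x y x' y'. (x, x') \<in> R \<longrightarrow> (y, y') \<in> R \<longrightarrow> ((x, y) \<in> P \<longleftrightarrow> (x', y') \<in> Q))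
    \<longleftrightarrow> R\<inverse> O P O R = Q"
proof -
  have R: "R \<subseteq> X \<times> X" and pre: "\<And>y. y \<in> X \<Longrightarrow> \<exists>!x. (x, y) \<in> R"
    using bij unfolding rel_bij_on_def rel_fun_on_def by auto
  have inj: "x = z" if "(x, y) \<in> R" "(z, y) \<in> R" for x y z
    using pre[of y] that R by blast
  show ?thesis
  proof
    assume transport: "\<forall>x y x' y'. (x, x') \<in> R \<longrightarrow> (y, y') \<in> R \<longrightarrow> ((x, y) \<in> P \<longleftrightarrow> (x', y') \<in> Q)"
    show "R\<inverse> O P O R = Q"
    proof (intro equalityI subsetI)
      fix p assume "p \<in> R\<inverse> O P O R"
      with transport show "p \<in> Q" by blast
    next
      fix p assume "p \<in> Q"
      with Q obtain x' y' where p: "p = (x', y')" "x' \<in> X" "y' \<in> X" by blast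
      with pre obtain x y where "(x, x') \<in> R" "(y, y') \<in> R" by metis
      with transport p \<open>p \<in> Q\<close> show "p \<in> R\<inverse> O P O R" by blast
    qed
  next
    assume "R\<inverse> O P O R = Q"
    then show "\<forall>x y x' y'. (x, x') \<in> R \<longrightarrow> (y, y') \<in> R \<longrightarrow> ((x, y) \<in> P \<longleftrightarrow> (x', y') \<in> Q)"
      using inj by blast
  qed
qed

lemma order_aut_iff_relcomp:
  assumes "le \<subseteq> X \<times> X"
  shows "order_aut X le R \<longleftrightarrow> rel_bij_on X R \<and> R\<inverse> O le O R = le"
  unfolding order_aut_def by (intro conj_cong refl) (rule rel_bij_on_transport_iff[OF _ assms assms])

lemma dual_order_aut_iff_relcomp:
  assumes "le \<subseteq> X \<times> X"
  shows "dual_order_aut X le R \<longleftrightarrow> rel_bij_on X R \<and> R\<inverse> O le O R = le\<inverse>"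
proof -
  have "le\<inverse> \<subseteq> X \<times> X"
    using assms by blast
  then show ?thesis
    unfolding dual_order_aut_def
    by (intro conj_cong refl) (simp add: rel_bij_on_transport_iff[OF _ assms, symmetric])
qed

lemma converse_Int_Times_self: "R\<inverse> \<inter> (A \<times> A) = (R \<inter> (A \<times> A))\<inverse>"
  by blast

lemma Id_on_UN: "Id_on (\<Union>i\<in>I. X i) = (\<Union>i\<in>I. Id_on (X i))"
  by auto

context
  fixes X :: "'i \<Rightarrow> 'a set" and I :: "'i set"
  assumes disjoint: "disjoint_family_on X I"
begin

lemma block_index_unique: "i \<in> I \<Longrightarrow> j \<in> I \<Longrightarrow> x \<in> X i \<Longrightarrow> x \<in> X j \<Longrightarrow> i = j"
  using disjoint unfolding disjoint_family_on_def by blast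

lemma UN_blocks_mem_iff:
  assumes R: "\<And>j. j \<in> I \<Longrightarrow> R j \<subseteq> X j \<times> X j" and i: "i \<in> I" and "x \<in> X i \<or> y \<in> X i"
  shows "(x, y) \<in> (\<Union>j\<in>I. R j) \<longleftrightarrow> (x, y) \<in> R i"
proof
  assume "(x, y) \<in> (\<Union>j\<in>I. R j)"
  then obtain j where j: "j \<in> I" "(x, y) \<in> R j" by blast
  then have "x \<in> X j" "y \<in> X j"
    using R by auto
  then have "j = i"
    using block_index_unique[OF j(1) i] assms(3) by blast
  with j show "(x, y) \<in> R i" by simp
qed (use i in blast)

lemma UN_Int_block:
  assumes R: "\<And>j. j \<in> I \<Longrightarrow> R j \<subseteq> X j \<times> X j" and i: "i \<in> I"
  shows "(\<Union>j\<in>I. R j) \<inter> (X i \<times> X i) = R i"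
  using UN_blocks_mem_iff[OF R i] R[OF i] by auto

lemma UN_relcomp_blocks:
  assumes R: "\<And>i. i \<in> I \<Longrightarrow> R i \<subseteq> X i \<times> X i" and S: "\<And>i. i \<in> I \<Longrightarrow> S i \<subseteq> X i \<times> X i"
  shows "(\<Union>i\<in>I. R i) O (\<Union>i\<in>I. S i) = (\<Union>i\<in>I. R i O S i)"
proof (intro equalityI subsetI)
  fix p assume "p \<in> (\<Union>i\<in>I. R i) O (\<Union>i\<in>I. S i)"
  then obtain x y z i where p: "p = (x, z)" "i \<in> I" "(x, y) \<in> R i" "(y, z) \<in> (\<Union>i\<in>I. S i)"
    by blast
  then have "(y, z) \<in> S i"
    using R[OF p(2)] UN_blocks_mem_iff[OF S p(2)] by blast
  with p show "p \<in> (\<Union>i\<in>I. R i O S i)" by blast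
qed blast

lemma UN_relcomp3_blocks:
  assumes P: "\<And>i. i \<in> I \<Longrightarrow> P i \<subseteq> X i \<times> X i"
    and Q: "\<And>i. i \<in> I \<Longrightarrow> Q i \<subseteq> X i \<times> X i" and R: "\<And>i. i \<in> I \<Longrightarrow> R i \<subseteq> X i \<times> X i"
  shows "(\<Union>i\<in>I. P i) O (\<Union>i\<in>I. Q i) O (\<Union>i\<in>I. R i) = (\<Union>i\<in>I. P i O Q i O R i)"
proof -
  have QR: "Q i O R i \<subseteq> X i \<times> X i" if "i \<in> I" for i
    using Q[OF that] R[OF that] by blast
  show ?thesis
    using UN_relcomp_blocks[OF Q R] UN_relcomp_blocks[OF P QR] by simp
qed

lemma UN_Int_blocks:
  assumes R: "\<And>i. i \<in> I \<Longrightarrow> R i \<subseteq> X i \<times> X i" and S: "\<And>i. i \<in> I \<Longrightarrow> S i \<subseteq> X i \<times> X i"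
  shows "(\<Union>i\<in>I. R i) \<inter> (\<Union>i\<in>I. S i) = (\<Union>i\<in>I. R i \<inter> S i)"
proof (intro equalityI subrelI)
  fix x y assume "(x, y) \<in> (\<Union>i\<in>I. R i) \<inter> (\<Union>i\<in>I. S i)"
  then obtain i where p: "i \<in> I" "(x, y) \<in> R i" "(x, y) \<in> (\<Union>i\<in>I. S i)"
    by blast
  then have "(x, y) \<in> S i"
    using R[OF p(1)] UN_blocks_mem_iff[OF S p(1)] by blast
  with p show "(x, y) \<in> (\<Union>i\<in>I. R i \<inter> S i)" by blast
qed blast

lemma relcomp_Int_block:
  assumes "i \<in> I" and "R \<subseteq> (\<Union>j\<in>I. X j \<times> X j)"
  shows "(R O S) \<inter> (X i \<times> X i) = (R \<inter> (X i \<times> X i)) O (S \<inter> (X i \<times> X i))"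
  using assms block_index_unique by fast

lemma partial_order_on_UN_blocks:
  assumes "\<And>i. i \<in> I \<Longrightarrow> partial_order_on (X i) (r i)"
  shows "partial_order_on (\<Union>i\<in>I. X i) (\<Union>i\<in>I. r i)"
proof -
  have r: "r i \<subseteq> X i \<times> X i" "refl_on (X i) (r i)" "r i O r i \<subseteq> r i" "r i \<inter> (r i)\<inverse> \<subseteq> Id"
    if "i \<in> I" for i
    using assms[OF that]
    by (simp_all add: partial_order_on_def preorder_on_def trans_iff_relcomp_subset
        antisym_iff_Int_converse_subset_Id)
  have r_conv: "(r i)\<inverse> \<subseteq> X i \<times> X i" if "i \<in> I" for i
    using r(1)[OF that] by blast
  have "(\<Union>i\<in>I. r i) \<subseteq> (\<Union>i\<in>I. X i) \<times> (\<Union>i\<in>I. X i)"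
    using r(1) by blast
  moreover have "refl_on (\<Union>i\<in>I. X i) (\<Union>i\<in>I. r i)"
    using r(2) unfolding refl_on_def by blast
  moreover have "(\<Union>i\<in>I. r i) O (\<Union>i\<in>I. r i) \<subseteq> (\<Union>i\<in>I. r i)"
    using r(3) by (auto simp: UN_relcomp_blocks[OF r(1) r(1)])
  moreover have "(\<Union>i\<in>I. r i) \<inter> (\<Union>i\<in>I. r i)\<inverse> \<subseteq> Id"
    using r(4) by (auto simp: converse_UNION UN_Int_blocks[OF r(1) r_conv])
  ultimately show ?thesis
    by (simp add: partial_order_on_def preorder_on_def trans_iff_relcomp_subset
        antisym_iff_Int_converse_subset_Id)
qed

lemma equiv_UN_blocks:
  assumes "\<And>i. i \<in> I \<Longrightarrow> equiv (X i) (r i)"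
  shows "equiv (\<Union>i\<in>I. X i) (\<Union>i\<in>I. r i)"
proof -
  have r: "r i \<subseteq> X i \<times> X i" "refl_on (X i) (r i)" "(r i)\<inverse> = r i" "r i O r i \<subseteq> r i"
    if "i \<in> I" for i
    using assms[OF that] by (simp_all add: equiv_def sym_conv_converse_eq trans_iff_relcomp_subset)
  have "(\<Union>i\<in>I. r i) \<subseteq> (\<Union>i\<in>I. X i) \<times> (\<Union>i\<in>I. X i)"
    using r(1) by blast
  moreover have "refl_on (\<Union>i\<in>I. X i) (\<Union>i\<in>I. r i)"
    using r(2) unfolding refl_on_def by blast
  moreover have "(\<Union>i\<in>I. r i)\<inverse> = (\<Union>i\<in>I. r i)"
    using r(3) by (simp add: converse_UNION)
  moreover have "(\<Union>i\<in>I. r i) O (\<Union>i\<in>I. r i) \<subseteq> (\<Union>i\<in>I. r i)"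
    using r(4) by (auto simp: UN_relcomp_blocks[OF r(1) r(1)])
  ultimately show ?thesis
    by (simp add: equiv_def sym_conv_converse_eq trans_iff_relcomp_subset)
qed

lemma rel_bij_on_UN_blocks:
  assumes bij: "\<And>i. i \<in> I \<Longrightarrow> rel_bij_on (X i) (R i)"
  shows "rel_bij_on (\<Union>i\<in>I. X i) (\<Union>i\<in>I. R i)"
proof -
  have R: "R i \<subseteq> X i \<times> X i" if "i \<in> I" for i
    using bij[OF that] unfolding rel_bij_on_def rel_fun_on_def by blast
  show ?thesis
    unfolding rel_bij_on_def rel_fun_on_def
  proof (intro conjI ballI)
    show "(\<Union>i\<in>I. R i) \<subseteq> (\<Union>i\<in>I. X i) \<times> (\<Union>i\<in>I. X i)"
      using R by blast
  next
    fix x assume "x \<in> (\<Union>i\<in>I. X i)"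
    then obtain i where i: "i \<in> I" "x \<in> X i" by blast
    have "\<exists>!y. (x, y) \<in> R i"
      using bij[OF i(1)] i(2) unfolding rel_bij_on_def rel_fun_on_def by blast
    then show "\<exists>!y. (x, y) \<in> (\<Union>i\<in>I. R i)"
      using UN_blocks_mem_iff[OF R i(1)] i(2) by simp
  next
    fix y assume "y \<in> (\<Union>i\<in>I. X i)"
    then obtain i where i: "i \<in> I" "y \<in> X i" by blast
    have "\<exists>!x. (x, y) \<in> R i"
      using bij[OF i(1)] i(2) unfolding rel_bij_on_def rel_fun_on_def by blast
    then show "\<exists>!x. (x, y) \<in> (\<Union>i\<in>I. R i)"
      using UN_blocks_mem_iff[OF R i(1)] i(2) by simp
  qed
qed

lemma order_aut_UN_blocks:
  assumes le: "\<And>i. i \<in> I \<Longrightarrow> le i \<subseteq> X i \<times> X i"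
    and aut: "\<And>i. i \<in> I \<Longrightarrow> order_aut (X i) (le i) (R i)"
  shows "order_aut (\<Union>i\<in>I. X i) (\<Union>i\<in>I. le i) (\<Union>i\<in>I. R i)"
proof -
  have bij: "rel_bij_on (X i) (R i)" and conj: "(R i)\<inverse> O le i O R i = le i" if "i \<in> I" for i
    using aut[OF that] by (simp_all add: order_aut_iff_relcomp[OF le[OF that]])
  have R: "R i \<subseteq> X i \<times> X i" and R_conv: "(R i)\<inverse> \<subseteq> X i \<times> X i" if "i \<in> I" for i
    using bij[OF that] unfolding rel_bij_on_def rel_fun_on_def by blast+
  have "(\<Union>i\<in>I. R i)\<inverse> O (\<Union>i\<in>I. le i) O (\<Union>i\<in>I. R i) = (\<Union>i\<in>I. le i)"
    using UN_relcomp3_blocks[OF R_conv le R] conj by (simp add: converse_UNION)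
  moreover have "(\<Union>i\<in>I. le i) \<subseteq> (\<Union>i\<in>I. X i) \<times> (\<Union>i\<in>I. X i)"
    using le by blast
  ultimately show ?thesis
    using rel_bij_on_UN_blocks[OF bij] by (simp add: order_aut_iff_relcomp)
qed

lemma dual_order_aut_UN_blocks:
  assumes le: "\<And>i. i \<in> I \<Longrightarrow> le i \<subseteq> X i \<times> X i"
    and aut: "\<And>i. i \<in> I \<Longrightarrow> dual_order_aut (X i) (le i) (R i)"
  shows "dual_order_aut (\<Union>i\<in>I. X i) (\<Union>i\<in>I. le i) (\<Union>i\<in>I. R i)"
proof -
  have bij: "rel_bij_on (X i) (R i)" and conj: "(R i)\<inverse> O le i O R i = (le i)\<inverse>" if "i \<in> I" for i
    using aut[OF that] by (simp_all add: dual_order_aut_iff_relcomp[OF le[OF that]])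
  have R: "R i \<subseteq> X i \<times> X i" and R_conv: "(R i)\<inverse> \<subseteq> X i \<times> X i" if "i \<in> I" for i
    using bij[OF that] unfolding rel_bij_on_def rel_fun_on_def by blast+
  have "(\<Union>i\<in>I. R i)\<inverse> O (\<Union>i\<in>I. le i) O (\<Union>i\<in>I. R i) = (\<Union>i\<in>I. le i)\<inverse>"
    using UN_relcomp3_blocks[OF R_conv le R] conj by (simp add: converse_UNION)
  moreover have "(\<Union>i\<in>I. le i) \<subseteq> (\<Union>i\<in>I. X i) \<times> (\<Union>i\<in>I. X i)"
    using le by blast
  ultimately show ?thesis
    using rel_bij_on_UN_blocks[OF bij] by (simp add: dual_order_aut_iff_relcomp)
qed

lemma self_inverse_UN_blocks:
  assumes R: "\<And>i. i \<in> I \<Longrightarrow> R i \<subseteq> X i \<times> X i"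
    and inv: "\<And>i. i \<in> I \<Longrightarrow> self_inverse (X i) (R i)"
  shows "self_inverse (\<Union>i\<in>I. X i) (\<Union>i\<in>I. R i)"
  using inv UN_relcomp_blocks[OF R R] by (simp add: self_inverse_def Id_on_UN)

lemma up_sets_UN_blocks_iff:
  assumes E: "\<And>i. i \<in> I \<Longrightarrow> E i \<subseteq> X i \<times> X i" and le: "\<And>i. i \<in> I \<Longrightarrow> le i \<subseteq> X i \<times> X i"
  shows "R \<in> up_sets (\<Union>i\<in>I. E i) (\<Union>i\<in>I. le i) \<longleftrightarrow>
    R \<subseteq> (\<Union>i\<in>I. E i) \<and> (\<forall>i\<in>I. R \<inter> (X i \<times> X i) \<in> up_sets (E i) (le i))"
proof
  assume up: "R \<in> up_sets (\<Union>i\<in>I. E i) (\<Union>i\<in>I. le i)"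
  show "R \<subseteq> (\<Union>i\<in>I. E i) \<and> (\<forall>i\<in>I. R \<inter> (X i \<times> X i) \<in> up_sets (E i) (le i))"
  proof (intro conjI ballI)
    show sub: "R \<subseteq> (\<Union>i\<in>I. E i)"
      using up unfolding up_sets_def by blast
    fix i assume i: "i \<in> I"
    have "R \<inter> (X i \<times> X i) \<subseteq> E i"
      using sub UN_Int_block[OF E i] by blast
    moreover have "(x, y) \<in> R \<inter> (X i \<times> X i)"
      if "(u, v) \<in> R \<inter> (X i \<times> X i)" "(x, y) \<in> E i" "(x, u) \<in> le i" "(v, y) \<in> le i" for u v x y
      using up that E[OF i] i unfolding up_sets_def by blast
    ultimately show "R \<inter> (X i \<times> X i) \<in> up_sets (E i) (le i)"
      unfolding up_sets_def by blast
  qed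
next
  assume "R \<subseteq> (\<Union>i\<in>I. E i) \<and> (\<forall>i\<in>I. R \<inter> (X i \<times> X i) \<in> up_sets (E i) (le i))"
  then have sub: "R \<subseteq> (\<Union>i\<in>I. E i)"
    and up: "\<And>i. i \<in> I \<Longrightarrow> R \<inter> (X i \<times> X i) \<in> up_sets (E i) (le i)"
    by auto
  have "(x, y) \<in> R"
    if uv: "(u, v) \<in> R" and xy: "(x, y) \<in> (\<Union>i\<in>I. E i)"
      and xu: "(x, u) \<in> (\<Union>i\<in>I. le i)" and vy: "(v, y) \<in> (\<Union>i\<in>I. le i)" for u v x y
  proof -
    obtain i where i: "i \<in> I" "(x, y) \<in> E i"
      using xy by blast
    then have "x \<in> X i" "y \<in> X i"
      using E by blast+
    then have le_i: "(x, u) \<in> le i" "(v, y) \<in> le i"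
      using xu vy UN_blocks_mem_iff[OF le i(1)] by blast+
    then have "u \<in> X i" "v \<in> X i"
      using le[OF i(1)] by blast+
    then have "(x, y) \<in> R \<inter> (X i \<times> X i)"
      using up[OF i(1)] i(2) le_i uv unfolding up_sets_def by blast
    then show ?thesis by blast
  qed
  with sub show "R \<in> up_sets (\<Union>i\<in>I. E i) (\<Union>i\<in>I. le i)"
    unfolding up_sets_def by blast
qed

lemma up_sets_UN_blocks_bij:
  assumes E: "\<And>i. i \<in> I \<Longrightarrow> E i \<subseteq> X i \<times> X i" and le: "\<And>i. i \<in> I \<Longrightarrow> le i \<subseteq> X i \<times> X i"
  shows "bij_betw (\<lambda>R. \<lambda>i\<in>I. R \<inter> (X i \<times> X i))
    (up_sets (\<Union>i\<in>I. E i) (\<Union>i\<in>I. le i)) (\<Pi>\<^sub>E i\<in>I. up_sets (E i) (le i))"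
proof (rule bij_betw_byWitness[where f' = "\<lambda>f. \<Union>i\<in>I. f i"])
  show "\<forall>R\<in>up_sets (\<Union>i\<in>I. E i) (\<Union>i\<in>I. le i). (\<Union>i\<in>I. (\<lambda>i\<in>I. R \<inter> (X i \<times> X i)) i) = R"
  proof
    fix R assume "R \<in> up_sets (\<Union>i\<in>I. E i) (\<Union>i\<in>I. le i)"
    then have "R \<subseteq> (\<Union>i\<in>I. X i \<times> X i)"
      using E unfolding up_sets_def by blast
    then show "(\<Union>i\<in>I. (\<lambda>i\<in>I. R \<inter> (X i \<times> X i)) i) = R"
      by auto
  qed
  have f_blocks: "f i \<subseteq> X i \<times> X i"
    if "f \<in> (\<Pi>\<^sub>E i\<in>I. up_sets (E i) (le i))" "i \<in> I" for f i
    using that E unfolding up_sets_def by blast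
  show "\<forall>f\<in>\<Pi>\<^sub>E i\<in>I. up_sets (E i) (le i). (\<lambda>i\<in>I. (\<Union>j\<in>I. f j) \<inter> (X i \<times> X i)) = f"
  proof
    fix f assume f: "f \<in> (\<Pi>\<^sub>E i\<in>I. up_sets (E i) (le i))"
    have "(\<lambda>i\<in>I. (\<Union>j\<in>I. f j) \<inter> (X i \<times> X i)) = restrict f I"
      by (rule restrict_ext) (rule UN_Int_block[OF f_blocks[OF f]])
    also have "\<dots> = f"
      using f by (simp add: extensional_restrict)
    finally show "(\<lambda>i\<in>I. (\<Union>j\<in>I. f j) \<inter> (X i \<times> X i)) = f" .
  qed
  show "(\<lambda>R. \<lambda>i\<in>I. R \<inter> (X i \<times> X i)) ` up_sets (\<Union>i\<in>I. E i) (\<Union>i\<in>I. le i)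
    \<subseteq> (\<Pi>\<^sub>E i\<in>I. up_sets (E i) (le i))"
    using up_sets_UN_blocks_iff[OF E le] by auto
  show "(\<lambda>f. \<Union>i\<in>I. f i) ` (\<Pi>\<^sub>E i\<in>I. up_sets (E i) (le i)) \<subseteq> up_sets (\<Union>i\<in>I. E i) (\<Union>i\<in>I. le i)"
  proof clarify
    fix f assume f: "f \<in> (\<Pi>\<^sub>E i\<in>I. up_sets (E i) (le i))"
    have "(\<Union>i\<in>I. f i) \<subseteq> (\<Union>i\<in>I. E i)"
      using f unfolding up_sets_def by blast
    moreover have "(\<Union>j\<in>I. f j) \<inter> (X i \<times> X i) \<in> up_sets (E i) (le i)" if "i \<in> I" for i
      using f that UN_Int_block[OF f_blocks[OF f] that] by auto
    ultimately show "(\<Union>i\<in>I. f i) \<in> up_sets (\<Union>i\<in>I. E i) (\<Union>i\<in>I. le i)"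
      by (simp add: up_sets_UN_blocks_iff[OF E le])
  qed
qed

lemma dq_zero_rel_UN_Int_block:
  assumes E: "\<And>i. i \<in> I \<Longrightarrow> E i \<subseteq> X i \<times> X i" and le: "\<And>i. i \<in> I \<Longrightarrow> le i \<subseteq> X i \<times> X i"
    and alpha: "\<And>i. i \<in> I \<Longrightarrow> alpha i \<subseteq> X i \<times> X i" and i: "i \<in> I"
  shows "dq_zero_rel (\<Union>i\<in>I. E i) (\<Union>i\<in>I. le i) (\<Union>i\<in>I. alpha i) \<inter> (X i \<times> X i)
    = dq_zero_rel (E i) (le i) (alpha i)"
proof -
  have "(\<Union>i\<in>I. alpha i) \<subseteq> (\<Union>i\<in>I. X i \<times> X i)"
    using alpha by fast
  then show ?thesis
    unfolding dq_zero_rel_def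
    by (simp add: relcomp_Int_block[OF i] converse_Int_Times_self Diff_Int_distrib2
        UN_Int_block[OF E i] UN_Int_block[OF le i] UN_Int_block[OF alpha i])
qed

lemma Dq_UN_blocks_iso:
  assumes E: "\<And>i. i \<in> I \<Longrightarrow> E i \<subseteq> X i \<times> X i"
    and le: "\<And>i. i \<in> I \<Longrightarrow> le i \<subseteq> X i \<times> X i"
    and alpha: "\<And>i. i \<in> I \<Longrightarrow> alpha i \<subseteq> X i \<times> X i"
    and beta: "\<And>i. i \<in> I \<Longrightarrow> beta i \<subseteq> X i \<times> X i"
  shows "dq_iso (Dq (\<Union>i\<in>I. E i) (\<Union>i\<in>I. le i) (\<Union>i\<in>I. alpha i) (\<Union>i\<in>I. beta i))
    (dq_prod I (\<lambda>i. Dq (E i) (le i) (alpha i) (beta i))) (\<lambda>R. \<lambda>i\<in>I. R \<inter> (X i \<times> X i))"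
proof -
  let ?F = "\<Union>i\<in>I. E i" and ?L = "\<Union>i\<in>I. le i"
    and ?A = "\<Union>i\<in>I. alpha i" and ?B = "\<Union>i\<in>I. beta i"
    and ?blocks = "\<Union>i\<in>I. X i \<times> X i"
  let ?h = "\<lambda>R. \<lambda>i\<in>I. R \<inter> (X i \<times> X i)"
  have F_blocks: "?F \<subseteq> ?blocks" and A_blocks: "?A \<subseteq> ?blocks" and B_blocks: "?B \<subseteq> ?blocks"
    by (intro UN_mono order_refl E alpha beta; assumption)+
  note restr = UN_Int_block[OF E] UN_Int_block[OF le] UN_Int_block[OF alpha] UN_Int_block[OF beta]
  note zero_restr = dq_zero_rel_UN_Int_block[OF E le alpha]
  have up_blocks: "R \<subseteq> ?blocks" if "R \<in> up_sets ?F ?L" for R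
    using that F_blocks unfolding up_sets_def by blast
  show ?thesis
    unfolding dq_iso_def Dq_def dq_prod_def dqalg.simps
  proof (intro conjI ballI)
    show "bij_betw ?h (up_sets ?F ?L) (\<Pi>\<^sub>E i\<in>I. up_sets (E i) (le i))"
      by (rule up_sets_UN_blocks_bij[OF E le])
  next
    fix R S assume R: "R \<in> up_sets ?F ?L" and S: "S \<in> up_sets ?F ?L"
    show "?h (R \<inter> S) = (\<lambda>i\<in>I. ?h R i \<inter> ?h S i)"
      by (rule restrict_ext) auto
    show "?h (R \<union> S) = (\<lambda>i\<in>I. ?h R i \<union> ?h S i)"
      by (rule restrict_ext) auto
    show "?h (R O S) = (\<lambda>i\<in>I. ?h R i O ?h S i)"
      by (rule restrict_ext) (simp add: relcomp_Int_block[OF _ up_blocks[OF R]])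
  next
    show "?h ?L = (\<lambda>i\<in>I. le i)"
      by (rule restrict_ext) (simp add: restr)
  next
    show "?h (dq_zero_rel ?F ?L ?A) = (\<lambda>i\<in>I. dq_zero_rel (E i) (le i) (alpha i))"
      by (rule restrict_ext) (simp add: zero_restr)
  next
    fix R assume R: "R \<in> up_sets ?F ?L"
    have R_conv_blocks: "R\<inverse> \<subseteq> ?blocks" and F_diff_blocks: "?F - dq_zero_rel ?F ?L ?A \<subseteq> ?blocks"
      and F_diff_R_blocks: "?F - R \<subseteq> ?blocks"
      using up_blocks[OF R] F_blocks by blast+
    show "?h (?F - R\<inverse> O (?F - dq_zero_rel ?F ?L ?A)) =
      (\<lambda>i\<in>I. E i - (?h R i)\<inverse> O (E i - dq_zero_rel (E i) (le i) (alpha i)))"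
      by (rule restrict_ext) (simp add: Diff_Int_distrib2 relcomp_Int_block[OF _ R_conv_blocks]
          converse_Int_Times_self restr zero_restr)
    show "?h (?F - (?F - dq_zero_rel ?F ?L ?A) O R\<inverse>) =
      (\<lambda>i\<in>I. E i - (E i - dq_zero_rel (E i) (le i) (alpha i)) O (?h R i)\<inverse>)"
      by (rule restrict_ext) (simp add: Diff_Int_distrib2 relcomp_Int_block[OF _ F_diff_blocks]
          converse_Int_Times_self restr zero_restr)
    show "?h (?A O ?B O (?F - R) O ?B) = (\<lambda>i\<in>I. alpha i O beta i O (E i - ?h R i) O beta i)"
      by (rule restrict_ext) (simp add: Diff_Int_distrib2 relcomp_Int_block[OF _ A_blocks]
          relcomp_Int_block[OF _ B_blocks] relcomp_Int_block[OF _ F_diff_R_blocks] restr)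
  qed
qed

end

theorem theorem4p1:
  fixes I :: "'i set"
    and X :: "'i \<Rightarrow> 'a set"
    and le E alpha beta :: "'i \<Rightarrow> ('a \<times> 'a) set"
  assumes poset: "\<And>i. i \<in> I \<Longrightarrow> partial_order_on (X i) (le i)"
    and equivE: "\<And>i. i \<in> I \<Longrightarrow> equiv (X i) (E i)"
    and leE: "\<And>i. i \<in> I \<Longrightarrow> le i \<subseteq> E i"
    and disj: "\<And>i j. i \<in> I \<Longrightarrow> j \<in> I \<Longrightarrow> i \<noteq> j \<Longrightarrow> X i \<inter> X j = {}"
    and alpha_aut: "\<And>i. i \<in> I \<Longrightarrow> order_aut (X i) (le i) (alpha i)"
    and beta_aut: "\<And>i. i \<in> I \<Longrightarrow> dual_order_aut (X i) (le i) (beta i)"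
    and beta_inv: "\<And>i. i \<in> I \<Longrightarrow> self_inverse (X i) (beta i)"
    and alphaE: "\<And>i. i \<in> I \<Longrightarrow> alpha i \<subseteq> E i"
    and betaE: "\<And>i. i \<in> I \<Longrightarrow> beta i \<subseteq> E i"
    and beta_eq: "\<And>i. i \<in> I \<Longrightarrow> beta i = alpha i O beta i O alpha i"
  shows "partial_order_on (\<Union>i\<in>I. X i) (\<Union>i\<in>I. le i)
       \<and> equiv (\<Union>i\<in>I. X i) (\<Union>i\<in>I. E i)
       \<and> (\<Union>i\<in>I. le i) \<subseteq> (\<Union>i\<in>I. E i)
       \<and> order_aut (\<Union>i\<in>I. X i) (\<Union>i\<in>I. le i) (\<Union>i\<in>I. alpha i)
       \<and> (\<Union>i\<in>I. alpha i) \<subseteq> (\<Union>i\<in>I. E i)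
       \<and> dual_order_aut (\<Union>i\<in>I. X i) (\<Union>i\<in>I. le i) (\<Union>i\<in>I. beta i)
       \<and> self_inverse (\<Union>i\<in>I. X i) (\<Union>i\<in>I. beta i)
       \<and> (\<Union>i\<in>I. beta i) \<subseteq> (\<Union>i\<in>I. E i)
       \<and> (\<Union>i\<in>I. beta i) = (\<Union>i\<in>I. alpha i) O (\<Union>i\<in>I. beta i) O (\<Union>i\<in>I. alpha i)
       \<and> dq_isomorphic
           (Dq (\<Union>i\<in>I. E i) (\<Union>i\<in>I. le i) (\<Union>i\<in>I. alpha i) (\<Union>i\<in>I. beta i))
           (dq_prod I (\<lambda>i. Dq (E i) (le i) (alpha i) (beta i)))"
proof -
  have disjoint: "disjoint_family_on X I"
    using disj unfolding disjoint_family_on_def by blast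
  have E_blocks: "E i \<subseteq> X i \<times> X i" if "i \<in> I" for i
    using equivE[OF that] by (simp add: equiv_def)
  have le_blocks: "le i \<subseteq> X i \<times> X i" and alpha_blocks: "alpha i \<subseteq> X i \<times> X i"
    and beta_blocks: "beta i \<subseteq> X i \<times> X i" if "i \<in> I" for i
    using leE[OF that] alphaE[OF that] betaE[OF that] E_blocks[OF that] by (meson subset_trans)+
  have le_sub: "(\<Union>i\<in>I. le i) \<subseteq> (\<Union>i\<in>I. E i)" and alpha_sub: "(\<Union>i\<in>I. alpha i) \<subseteq> (\<Union>i\<in>I. E i)"
    and beta_sub: "(\<Union>i\<in>I. beta i) \<subseteq> (\<Union>i\<in>I. E i)"
    by (intro UN_mono order_refl leE alphaE betaE; assumption)+
  have beta_eq_UN: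
    "(\<Union>i\<in>I. beta i) = (\<Union>i\<in>I. alpha i) O (\<Union>i\<in>I. beta i) O (\<Union>i\<in>I. alpha i)"
    using UN_relcomp3_blocks[OF disjoint alpha_blocks beta_blocks alpha_blocks] beta_eq by simp
  have iso: "dq_isomorphic
      (Dq (\<Union>i\<in>I. E i) (\<Union>i\<in>I. le i) (\<Union>i\<in>I. alpha i) (\<Union>i\<in>I. beta i))
      (dq_prod I (\<lambda>i. Dq (E i) (le i) (alpha i) (beta i)))"
    unfolding dq_isomorphic_def
    using Dq_UN_blocks_iso[OF disjoint E_blocks le_blocks alpha_blocks beta_blocks] by blast
  show ?thesis
    by (intro conjI le_sub alpha_sub beta_sub beta_eq_UN iso
        partial_order_on_UN_blocks[OF disjoint poset]
        equiv_UN_blocks[OF disjoint equivE]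
        order_aut_UN_blocks[OF disjoint le_blocks alpha_aut]
        dual_order_aut_UN_blocks[OF disjoint le_blocks beta_aut]
        self_inverse_UN_blocks[OF disjoint beta_blocks beta_inv])
qed

end
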